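(* Let $D = (D_1\xrightarrow{\partial^D} D_0)$ be a two-term chain complex and $C$ a two- or three-term chain complex, both of finite-dimensional $\mathbb{F}_2$-vector spaces with chosen bases. Consider a modular architecture whose modules are indexed by the basis elements of $D_1\oplus D_0$, each module containing one qubit for each basis element of $\bigoplus_i C_i$, with connectivity as follows: (intra-modular) in every module, the qubit labelled $c$ is connected to the qubit labelled $c'$ whenever $c'$ appears with nonzero coefficient in $\partial^C c$; (inter-modular) module $d_1$ is connected to module $d_0$ whenever $d_0$ appears with nonzero coefficient in $\partial^D d_1$, and connected modules allow entangling operations between any qubit of one module and any qubit of the other. Let $\varphi$ be a connection assigning to each such pair $(d_1,d_0)$ an automorphism $\varphi(d_1,d_0)$ of the chain complex $C$ (permuting basis elements), and let $E = D\otimes_\varphi C$ be the fiber bundle complex with $E_n=\bigoplus_{p+q=n} D_p\otimes C_q$ and boundary $\partial^E=\partial_\varphi\oplus \mathrm{id}^D\otimes\partial^C$, where $\partial_\varphi(d_1\otimes c)=\sum_{d_0\in\partial^D d_1} d_0\otimes \varphi(d_1,d_0)(c)$ and $\partial_\varphi$ vanishes on $D_0\otimes C$. Let $\mathcal{E}$ be the CSS code obtained by choosing an index $i$ and taking basis elements of $E_i$ as data qubits, of $E_{i+1}$ as $Z$ checks and of $E_{i-1}$ as $X$ checks, with parity check matrices given by $\partial^E$. Assign each basis element $d\otimes c$ of $E$ to the qubit labelled $c$ in module $d$. Then $\mathcal{E}$ respects the connectivity constraints of the architecture: whenever a check and a data qubit are adjacent in the Tanner graph of $\mathcal{E}$,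 the corresponding physical qubits are connected, either within a module or between connected modules as specified above.
   Context: A chain complex is a sequence of vector spaces $C_i$ with linear maps $\partial_i:C_i\to C_{i-1}$ satisfying $\partial_i\partial_{i+1}=0$. A two-term complex represents a classical code with parity check matrix $\partial_1$; a three-term complex $C_{i+1}\to C_i\to C_{i-1}$ represents a CSS code with $H_Z^T=\partial_{i+1}$, $H_X=\partial_i$. Two qubits being "connected" means the architecture allows directly implementing two-qubit entangling operations between them. A code "respects" the connectivity constraints if one can associate a physical qubit to every parity check and data qubit of the code such that each parity check qubit is connected to the data qubits in its support. The notation $d_0\in\partial^D d_1$ means $d_0$ is a basis element appearing with nonzero coefficient in $\partial^D d_1$. *)

theory Defs
  imports Main "HOL-Library.Z2"
begin

text \<open>A complex with chosen bases is given by
  its graded basis sets and the matrix of its boundary: bd x y is the coefficient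
  of the basis element y in the boundary of the basis element x.\<close>

definition two_term_complex :: "'d set \<Rightarrow> 'd set \<Rightarrow> ('d \<Rightarrow> 'd \<Rightarrow> bit) \<Rightarrow> bool" where
  "two_term_complex D1 D0 dD \<longleftrightarrow> finite D1 \<and> finite D0 \<and> D1 \<inter> D0 = {} \<and>
     (\<forall>x y. dD x y \<noteq> 0 \<longrightarrow> x \<in> D1 \<and> y \<in> D0)"

definition small_complex :: "(int \<Rightarrow> 'c set) \<Rightarrow> ('c \<Rightarrow> 'c \<Rightarrow> bit) \<Rightarrow> bool" where
  "small_complex Cb dC \<longleftrightarrow>
     (\<forall>q. finite (Cb q)) \<and>
     (\<forall>q. q < 0 \<or> q > 2 \<longrightarrow> Cb q = {}) \<and>
     (\<forall>p q. p \<noteq> q \<longrightarrow> Cb p \<inter> Cb q = {}) \<and>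
     (\<forall>x y. dC x y \<noteq> 0 \<longrightarrow> (\<exists>q. x \<in> Cb q \<and> y \<in> Cb (q - 1))) \<and>
     (\<forall>x z. (\<Sum>y\<in>(\<Union>q. Cb q). dC x y * dC y z) = 0)"

definition basis_chain_aut :: "(int \<Rightarrow> 'c set) \<Rightarrow> ('c \<Rightarrow> 'c \<Rightarrow> bit) \<Rightarrow> ('c \<Rightarrow> 'c) \<Rightarrow> bool" where
  "basis_chain_aut Cb dC f \<longleftrightarrow>
     (\<forall>q. bij_betw f (Cb q) (Cb q)) \<and>
     (\<forall>x\<in>(\<Union>q. Cb q). \<forall>y\<in>(\<Union>q. Cb q). dC (f x) (f y) = dC x y)"

definition is_connection :: "'d set \<Rightarrow> 'd set \<Rightarrow> ('d \<Rightarrow> 'd \<Rightarrow> bit) \<Rightarrow> (int \<Rightarrow> 'c set) \<Rightarrow>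
    ('c \<Rightarrow> 'c \<Rightarrow> bit) \<Rightarrow> ('d \<Rightarrow> 'd \<Rightarrow> 'c \<Rightarrow> 'c) \<Rightarrow> bool" where
  "is_connection D1 D0 dD Cb dC \<phi> \<longleftrightarrow>
     (\<forall>d1\<in>D1. \<forall>d0\<in>D0. dD d1 d0 \<noteq> 0 \<longrightarrow> basis_chain_aut Cb dC (\<phi> d1 d0))"

text \<open>Basis of E_n = (D0 \<otimes> C_n) \<oplus> (D1 \<otimes> C_(n-1)); basis element d \<otimes> c is the pair (d,c).\<close>
definition fb_basis :: "'d set \<Rightarrow> 'd set \<Rightarrow> (int \<Rightarrow> 'c set) \<Rightarrow> int \<Rightarrow> ('d \<times> 'c) set" where
  "fb_basis D1 D0 Cb n = (D0 \<times> Cb n) \<union> (D1 \<times> Cb (n - 1))"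

text \<open>Boundary of the fiber bundle complex: coefficient of (d',c') in
  \<partial>^E (d \<otimes> c) = \<partial>_\<phi>(d \<otimes> c) + (id \<otimes> \<partial>^C)(d \<otimes> c).\<close>
definition fb_boundary :: "'d set \<Rightarrow> 'd set \<Rightarrow> ('d \<Rightarrow> 'd \<Rightarrow> bit) \<Rightarrow> ('c \<Rightarrow> 'c \<Rightarrow> bit) \<Rightarrow>
    ('d \<Rightarrow> 'd \<Rightarrow> 'c \<Rightarrow> 'c) \<Rightarrow> 'd \<times> 'c \<Rightarrow> 'd \<times> 'c \<Rightarrow> bit" where
  "fb_boundary D1 D0 dD dC \<phi> x y =
     (case x of (d, c) \<Rightarrow> case y of (d', c') \<Rightarrow>
       (if d \<in> D1 \<and> d' \<in> D0 \<and> \<phi> d d' c = c' then dD d d' else 0)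
       + (if d = d' then dC c c' else 0))"

text \<open>Connectivity of the modular architecture. Physical qubit (d,c) is the qubit
  labelled c in module d. Connectivity is symmetric.\<close>
definition arch_connected_dir :: "'d set \<Rightarrow> 'd set \<Rightarrow> ('d \<Rightarrow> 'd \<Rightarrow> bit) \<Rightarrow> (int \<Rightarrow> 'c set) \<Rightarrow>
    ('c \<Rightarrow> 'c \<Rightarrow> bit) \<Rightarrow> 'd \<times> 'c \<Rightarrow> 'd \<times> 'c \<Rightarrow> bool" where
  "arch_connected_dir D1 D0 dD Cb dC x y \<longleftrightarrow>
     (case x of (d, c) \<Rightarrow> case y of (d', c') \<Rightarrow>
       d \<in> D1 \<union> D0 \<and> d' \<in> D1 \<union> D0 \<and> c \<in> (\<Union>q. Cb q) \<and> c' \<in> (\<Union>q. Cb q) \<and>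
       ((d = d' \<and> dC c c' \<noteq> 0) \<or> (d \<in> D1 \<and> d' \<in> D0 \<and> dD d d' \<noteq> 0)))"

definition arch_connected :: "'d set \<Rightarrow> 'd set \<Rightarrow> ('d \<Rightarrow> 'd \<Rightarrow> bit) \<Rightarrow> (int \<Rightarrow> 'c set) \<Rightarrow>
    ('c \<Rightarrow> 'c \<Rightarrow> bit) \<Rightarrow> 'd \<times> 'c \<Rightarrow> 'd \<times> 'c \<Rightarrow> bool" where
  "arch_connected D1 D0 dD Cb dC x y \<longleftrightarrow>
     arch_connected_dir D1 D0 dD Cb dC x y \<or> arch_connected_dir D1 D0 dD Cb dC y x"

end

theory Submission
  imports Defs
begin

text \<open>A nonzero entry of the boundary of E between d \<otimes> c and d' \<otimes> c' comes either from
  the twisted part, which only joins module d to a module d' in the boundary of d, or from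
  id \<otimes> dC, which stays in module d and joins c to a qubit c' in the boundary of c. Both
  are edges of the architecture. This is a property of the support of the boundary matrix
  alone.\<close>

lemma fb_boundary_nonzero_cases:
  assumes "fb_boundary D1 D0 dD dC \<phi> (d, c) (d', c') \<noteq> 0"
  shows "(d \<in> D1 \<and> d' \<in> D0 \<and> dD d d' \<noteq> 0) \<or> (d = d' \<and> dC c c' \<noteq> 0)"
  using assms unfolding fb_boundary_def by (auto split: if_splits)

lemma fb_basis_memD:
  assumes "(d, c) \<in> fb_basis D1 D0 Cb n"
  shows "d \<in> D1 \<union> D0" and "c \<in> (\<Union>q. Cb q)"
  using assms unfolding fb_basis_def by auto

lemma fb_boundary_nonzero_imp_arch_connected_dir:
  assumes "x \<in> fb_basis D1 D0 Cb n" and "y \<in> fb_basis D1 D0 Cb m"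
    and "fb_boundary D1 D0 dD dC \<phi> x y \<noteq> 0"
  shows "arch_connected_dir D1 D0 dD Cb dC x y"
proof -
  obtain d c d' c' where xy: "x = (d, c)" "y = (d', c')"
    by (cases x, cases y)
  have "(d \<in> D1 \<and> d' \<in> D0 \<and> dD d d' \<noteq> 0) \<or> (d = d' \<and> dC c c' \<noteq> 0)"
    using fb_boundary_nonzero_cases assms(3) unfolding xy .
  moreover note fb_basis_memD[OF assms(1)[unfolded xy(1)]]
  moreover note fb_basis_memD[OF assms(2)[unfolded xy(2)]]
  ultimately show ?thesis
    unfolding xy arch_connected_dir_def by auto
qed

theorem theorem3:
  fixes D1 D0 :: "'d set" and dD :: "'d \<Rightarrow> 'd \<Rightarrow> bit"
    and Cb :: "int \<Rightarrow> 'c set" and dC :: "'c \<Rightarrow> 'c \<Rightarrow> bit"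
    and \<phi> :: "'d \<Rightarrow> 'd \<Rightarrow> 'c \<Rightarrow> 'c" and i :: int
  assumes "two_term_complex D1 D0 dD"
    and "small_complex Cb dC"
    and "is_connection D1 D0 dD Cb dC \<phi>"
  shows "(\<forall>z\<in>fb_basis D1 D0 Cb (i + 1). \<forall>q\<in>fb_basis D1 D0 Cb i.
            fb_boundary D1 D0 dD dC \<phi> z q \<noteq> 0 \<longrightarrow> arch_connected D1 D0 dD Cb dC z q)
       \<and> (\<forall>x\<in>fb_basis D1 D0 Cb (i - 1). \<forall>q\<in>fb_basis D1 D0 Cb i.
            fb_boundary D1 D0 dD dC \<phi> q x \<noteq> 0 \<longrightarrow> arch_connected D1 D0 dD Cb dC x q)"
  using fb_boundary_nonzero_imp_arch_connected_dir unfolding arch_connected_def by blast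

end
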